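(* (1) For any group $(G,\cdot)$, setting $a\triangleright b=a^{-1}ba$ makes $(G,\cdot,\triangleright)$ a post-group. (2) For any two-step nilpotent group $(G,\cdot)$ and any integer $n\neq 0$, setting $a\triangleright b=a^{-n}ba^{n}$ makes $(G,\cdot,\triangleright)$ a post-group.
   Context: A post-group is a triple $(G,\cdot,\triangleright)$ with $(G,\cdot)$ a group and $\triangleright$ a binary operation such that for each $a$ the map $b\mapsto a\triangleright b$ is an automorphism of $(G,\cdot)$ and $a\triangleright(b\triangleright c)=(a\cdot(a\triangleright b))\triangleright c$ for all $a,b,c\in G$. A two-step nilpotent group is a group of nilpotency class at most $2$, i.e. all commutators $[a,b]=a^{-1}b^{-1}ab$ are central. *)

theory Defs
  imports "HOL-Algebra.Group"
begin

definition post_group :: "('a, 'b) monoid_scheme \<Rightarrow> ('a \<Rightarrow> 'a \<Rightarrow> 'a) \<Rightarrow> bool" where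
  "post_group G tri \<longleftrightarrow> group G \<and>
     (\<forall>a \<in> carrier G. tri a \<in> iso G G) \<and>
     (\<forall>a \<in> carrier G. \<forall>b \<in> carrier G. \<forall>c \<in> carrier G.
        tri a (tri b c) = tri (a \<otimes>\<^bsub>G\<^esub> tri a b) c)"

definition commutator :: "('a, 'b) monoid_scheme \<Rightarrow> 'a \<Rightarrow> 'a \<Rightarrow> 'a" where
  "commutator G a b = inv\<^bsub>G\<^esub> a \<otimes>\<^bsub>G\<^esub> inv\<^bsub>G\<^esub> b \<otimes>\<^bsub>G\<^esub> a \<otimes>\<^bsub>G\<^esub> b"

definition two_step_nilpotent :: "('a, 'b) monoid_scheme \<Rightarrow> bool" where
  "two_step_nilpotent G \<longleftrightarrow> group G \<and>
     (\<forall>a \<in> carrier G. \<forall>b \<in> carrier G. \<forall>x \<in> carrier G.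
        commutator G a b \<otimes>\<^bsub>G\<^esub> x = x \<otimes>\<^bsub>G\<^esub> commutator G a b)"

end

theory Submission
  imports Defs
begin

(* Both operations have the form a |> b = p(a)^-1 b p(a), with p(a) = a resp. p(a) = a^n, so every
   a |> _ is an inner automorphism, and a |> (b |> c) is the conjugate of c by p(b) p(a).  The
   post-group identity therefore says that p(a (a |> b)) and p(b) p(a) induce the same inner
   automorphism.  For p(a) = a they are even equal: a (a^-1 b a) = b a.  In a two-step nilpotent
   group, x^-1 c x = [x, c^-1] c, and x |-> [x, c^-1] is a homomorphism into the centre that is
   invariant under conjugating its argument; so both d^n, with d = a (a^-n b a^n), and b^n a^n act
   on c through the same central element [b, c^-1]^n [a, c^-1]^n. *)

context group
begin

lemma mult_inv_cancel_left [simp]: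
  "x \<in> carrier G \<Longrightarrow> y \<in> carrier G \<Longrightarrow> x \<otimes> (inv x \<otimes> y) = y"
  by (simp add: m_assoc [symmetric])

lemma inv_mult_cancel_left [simp]:
  "x \<in> carrier G \<Longrightarrow> y \<in> carrier G \<Longrightarrow> inv x \<otimes> (x \<otimes> y) = y"
  by (simp add: m_assoc [symmetric])

lemma inner_automorphism_iso:
  assumes g: "g \<in> carrier G"
  shows "(\<lambda>x. inv g \<otimes> x \<otimes> g) \<in> iso G G"
  unfolding iso_iff
proof (intro conjI)
  show "(\<lambda>x. inv g \<otimes> x \<otimes> g) \<in> hom G G"
    using g by (intro homI) (simp_all add: m_assoc)
  show "(\<lambda>x. inv g \<otimes> x \<otimes> g) ` carrier G = carrier G"
  proof (intro equalityI subsetI)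
    fix y assume y: "y \<in> carrier G"
    then have "y = inv g \<otimes> (g \<otimes> y \<otimes> inv g) \<otimes> g"
      using g by (simp add: m_assoc)
    then show "y \<in> (\<lambda>x. inv g \<otimes> x \<otimes> g) ` carrier G"
      using g y by blast
  qed (use g in auto)
  show "inj_on (\<lambda>x. inv g \<otimes> x \<otimes> g) (carrier G)"
    using g by (intro inj_onI) simp
qed

lemma conj_mult:
  assumes "x \<in> carrier G" "y \<in> carrier G" "c \<in> carrier G"
  shows "inv (x \<otimes> y) \<otimes> c \<otimes> (x \<otimes> y) = inv y \<otimes> (inv x \<otimes> c \<otimes> x) \<otimes> y"
  using assms by (simp add: inv_mult_group m_assoc)

lemma commutator_closed [simp]:
  "x \<in> carrier G \<Longrightarrow> z \<in> carrier G \<Longrightarrow> commutator G x z \<in> carrier G"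
  by (simp add: commutator_def)

lemma commutator_one_left [simp]:
  "z \<in> carrier G \<Longrightarrow> commutator G \<one> z = \<one>"
  by (simp add: commutator_def)

lemma conj_eq_commutator_mult:
  assumes "x \<in> carrier G" "c \<in> carrier G"
  shows "inv x \<otimes> c \<otimes> x = commutator G x (inv c) \<otimes> c"
  using assms by (simp add: commutator_def m_assoc)

lemma post_group_conjugation:
  assumes p_closed: "\<And>a. a \<in> carrier G \<Longrightarrow> p a \<in> carrier G"
    and tri: "\<And>a b. a \<in> carrier G \<Longrightarrow> b \<in> carrier G \<Longrightarrow> tri a b = inv (p a) \<otimes> b \<otimes> p a"
    and coherent: "\<And>a b c. a \<in> carrier G \<Longrightarrow> b \<in> carrier G \<Longrightarrow> c \<in> carrier G \<Longrightarrow>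
      inv (p (a \<otimes> tri a b)) \<otimes> c \<otimes> p (a \<otimes> tri a b) = inv (p b \<otimes> p a) \<otimes> c \<otimes> (p b \<otimes> p a)"
  shows "post_group G tri"
  unfolding post_group_def
proof (intro conjI ballI)
  show "group G" by (rule is_group)
  fix a assume a: "a \<in> carrier G"
  show "tri a \<in> iso G G"
    using inner_automorphism_iso[OF p_closed[OF a]] by (rule iso_eq) (simp add: tri a)
  fix b c assume b: "b \<in> carrier G" and c: "c \<in> carrier G"
  have "tri a (tri b c) = inv (p a) \<otimes> (inv (p b) \<otimes> c \<otimes> p b) \<otimes> p a"
    using a b c p_closed by (simp add: tri)
  also have "\<dots> = inv (p b \<otimes> p a) \<otimes> c \<otimes> (p b \<otimes> p a)"
    using a b c p_closed by (simp add: conj_mult)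
  also have "\<dots> = inv (p (a \<otimes> tri a b)) \<otimes> c \<otimes> p (a \<otimes> tri a b)"
    using a b c by (simp add: coherent)
  also have "\<dots> = tri (a \<otimes> tri a b) c"
    using a b c p_closed by (simp add: tri)
  finally show "tri a (tri b c) = tri (a \<otimes> tri a b) c" .
qed

lemma post_group_right_conjugation: "post_group G (\<lambda>a b. inv a \<otimes> b \<otimes> a)"
proof (rule post_group_conjugation[where p = "\<lambda>a. a"])
  fix a b c assume "a \<in> carrier G" "b \<in> carrier G" "c \<in> carrier G"
  then have "a \<otimes> (inv a \<otimes> b \<otimes> a) = b \<otimes> a"
    by (simp add: m_assoc)
  then show "inv (a \<otimes> (inv a \<otimes> b \<otimes> a)) \<otimes> c \<otimes> (a \<otimes> (inv a \<otimes> b \<otimes> a))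
    = inv (b \<otimes> a) \<otimes> c \<otimes> (b \<otimes> a)"
    by simp
qed simp_all

end

locale two_step_nilpotent_group = group +
  assumes commutator_central:
    "\<And>a b x. a \<in> carrier G \<Longrightarrow> b \<in> carrier G \<Longrightarrow> x \<in> carrier G \<Longrightarrow>
      commutator G a b \<otimes> x = x \<otimes> commutator G a b"

lemma two_step_nilpotent_group_if_two_step_nilpotent:
  "two_step_nilpotent G \<Longrightarrow> two_step_nilpotent_group G"
  by (simp add: two_step_nilpotent_def two_step_nilpotent_group_def
      two_step_nilpotent_group_axioms_def)

context two_step_nilpotent_group
begin

lemma commutator_mult_left:
  assumes x: "x \<in> carrier G" and y: "y \<in> carrier G" and z: "z \<in> carrier G"
  shows "commutator G (x \<otimes> y) z = commutator G x z \<otimes> commutator G y z"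
proof -
  have "commutator G (x \<otimes> y) z = inv y \<otimes> commutator G x z \<otimes> (inv z \<otimes> y \<otimes> z)"
    using x y z by (simp add: commutator_def inv_mult_group m_assoc)
  also have "\<dots> = commutator G x z \<otimes> inv y \<otimes> (inv z \<otimes> y \<otimes> z)"
    using x y z commutator_central[of x z "inv y"] by simp
  also have "\<dots> = commutator G x z \<otimes> commutator G y z"
    using x y z by (simp add: commutator_def m_assoc)
  finally show ?thesis .
qed

lemma commutator_left_hom:
  "z \<in> carrier G \<Longrightarrow> (\<lambda>x. commutator G x z) \<in> hom G G"
  by (intro homI) (simp_all add: commutator_mult_left)

lemma commutator_int_pow_left:
  assumes "x \<in> carrier G" "z \<in> carrier G"
  shows "commutator G (x [^] (n::int)) z = commutator G x z [^] n"
proof -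
  interpret group_hom G G "\<lambda>x. commutator G x z"
    using assms by (simp add: group_hom_def group_hom_axioms_def is_group commutator_left_hom)
  show ?thesis using hom_int_pow assms by simp
qed

lemma commutator_conj_left:
  assumes g: "g \<in> carrier G" and x: "x \<in> carrier G" and z: "z \<in> carrier G"
  shows "commutator G (inv g \<otimes> x \<otimes> g) z = commutator G x z"
proof -
  have "commutator G (inv g \<otimes> x \<otimes> g) z
      = commutator G x z \<otimes> (commutator G (inv g) z \<otimes> commutator G g z)"
    using g x z by (simp add: commutator_mult_left commutator_central[of x z] m_assoc)
  also have "\<dots> = commutator G x z \<otimes> commutator G (inv g \<otimes> g) z"
    using g z by (simp add: commutator_mult_left[of "inv g" g z, symmetric])
  also have "\<dots> = commutator G x z"
    using g x z by simp
  finally show ?thesis .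
qed

lemma conj_int_pow_coherent:
  fixes n :: int
  assumes a: "a \<in> carrier G" and b: "b \<in> carrier G" and c: "c \<in> carrier G"
  defines "d \<equiv> a \<otimes> (inv (a [^] n) \<otimes> b \<otimes> a [^] n)"
  shows "inv (d [^] n) \<otimes> c \<otimes> d [^] n = inv (b [^] n \<otimes> a [^] n) \<otimes> c \<otimes> (b [^] n \<otimes> a [^] n)"
proof -
  define f where "f x = commutator G x (inv c)" for x
  have f_closed: "f x \<in> carrier G" if "x \<in> carrier G" for x
    using that c by (simp add: f_def)
  have f_mult: "f (x \<otimes> y) = f x \<otimes> f y" if "x \<in> carrier G" "y \<in> carrier G" for x y
    using that c by (simp add: f_def commutator_mult_left)
  have f_pow: "f (x [^] n) = f x [^] n" if "x \<in> carrier G" for x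
    using that c by (simp add: f_def commutator_int_pow_left)
  have f_comm: "f a \<otimes> f b = f b \<otimes> f a"
    using a b c commutator_central[of a "inv c" "f b"] by (simp add: f_def)
  have conj_f: "inv x \<otimes> c \<otimes> x = f x \<otimes> c" if "x \<in> carrier G" for x
    using that c by (simp add: f_def conj_eq_commutator_mult)
  have d: "d \<in> carrier G"
    using a b by (simp add: d_def)
  have "f d = f a \<otimes> f (inv (a [^] n) \<otimes> b \<otimes> a [^] n)"
    using a b by (simp add: d_def f_mult)
  also have "\<dots> = f a \<otimes> f b"
    using a b c by (simp add: f_def commutator_conj_left)
  also have "\<dots> = f b \<otimes> f a"
    by (rule f_comm)
  finally have fd: "f d = f b \<otimes> f a" .
  have "inv (d [^] n) \<otimes> c \<otimes> d [^] n = f d [^] n \<otimes> c"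
    using d by (simp add: conj_f f_pow)
  also have "\<dots> = f b [^] n \<otimes> f a [^] n \<otimes> c"
    using a b f_closed f_comm by (simp add: fd int_pow_mult_distrib)
  also have "\<dots> = f (b [^] n \<otimes> a [^] n) \<otimes> c"
    using a b by (simp add: f_mult f_pow)
  also have "\<dots> = inv (b [^] n \<otimes> a [^] n) \<otimes> c \<otimes> (b [^] n \<otimes> a [^] n)"
    using a b by (simp add: conj_f)
  finally show ?thesis .
qed

lemma post_group_int_pow_conjugation:
  fixes n :: int
  shows "post_group G (\<lambda>a b. a [^] (- n) \<otimes> b \<otimes> a [^] n)"
proof (rule post_group_conjugation[where p = "\<lambda>a. a [^] n"])
  fix a b c assume "a \<in> carrier G" "b \<in> carrier G" "c \<in> carrier G"
  then show "inv ((a \<otimes> (a [^] (- n) \<otimes> b \<otimes> a [^] n)) [^] n) \<otimes> c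
      \<otimes> (a \<otimes> (a [^] (- n) \<otimes> b \<otimes> a [^] n)) [^] n
    = inv (b [^] n \<otimes> a [^] n) \<otimes> c \<otimes> (b [^] n \<otimes> a [^] n)"
    using conj_int_pow_coherent[of a b c n] by (simp add: int_pow_neg)
qed (simp_all add: int_pow_neg)

end

theorem proposition5p3:
  shows "(\<forall>G :: ('a, 'b) monoid_scheme. group G \<longrightarrow>
            post_group G (\<lambda>a b. inv\<^bsub>G\<^esub> a \<otimes>\<^bsub>G\<^esub> b \<otimes>\<^bsub>G\<^esub> a))
       \<and> (\<forall>(G :: ('a, 'b) monoid_scheme) (n :: int). two_step_nilpotent G \<longrightarrow> n \<noteq> 0 \<longrightarrow>
            post_group G (\<lambda>a b. a [^]\<^bsub>G\<^esub> (- n) \<otimes>\<^bsub>G\<^esub> b \<otimes>\<^bsub>G\<^esub> a [^]\<^bsub>G\<^esub> n))"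
  using group.post_group_right_conjugation
    two_step_nilpotent_group.post_group_int_pow_conjugation
    two_step_nilpotent_group_if_two_step_nilpotent
  by blast

end
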